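(* Every graph $G$ with $v(G) \geq 3$ vertices satisfies $\tau_4(G) \leq v(G) - 3$ in the $K_4$-bootstrap percolation process. In other words, for each $t \geq 1$, the graphs in the family $\mathcal H_t$ (for $r=4$, which have $t+3$ vertices and saturation time $t$) are vertex-minimal among graphs $G$ with $\tau_4(G) = t$.
   Context: $K_4$-bootstrap percolation: for a graph $G$ on vertex set $[n]$, set $G_0 := G$ and $G_{t+1} := G_t \cup \{e : \exists$ a copy $H$ of $K_4$ with $e \in H \subseteq G_t \cup \{e\}\}$; the saturation time is $\tau_4(G) := \min\{t \geq 0 : G_t = \bigcup_s G_s\}$. The family $\mathcal H_t$ (for $r=4$): start with a triangle (body) on $V_0$ and a fixed vertex $v_0 \in V_0$; $\mathcal H_1 = \{K_4 - e\}$, obtained by adding a vertex $v_1$ adjacent to $v_0$ and one other body vertex; for $t \geq 2$, $H_t \in \mathcal H_t$ is obtained from some $H_{t-1} \in \mathcal H_{t-1}$ (on $V_{t-1}$) by adding a new vertex $v_t$ with exactly $2$ neighbours in $V_{t-1}$, one of which is $v_{t-1}$ and the other of which is not a neighbour of $v_{t-1}$. *)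

theory Defs
  imports Main
begin

definition graph_on :: "nat \<Rightarrow> nat set set \<Rightarrow> bool" where
  "graph_on n G \<longleftrightarrow> (\<forall>e\<in>G. e \<subseteq> {0..<n} \<and> card e = 2)"

definition clique_edges :: "nat set \<Rightarrow> nat set set" where
  "clique_edges K = {e. e \<subseteq> K \<and> card e = 2}"

definition k4_step :: "nat \<Rightarrow> nat set set \<Rightarrow> nat set set" where
  "k4_step n G = G \<union> {e. e \<subseteq> {0..<n} \<and> card e = 2 \<and>
      (\<exists>K. K \<subseteq> {0..<n} \<and> card K = 4 \<and> e \<in> clique_edges K \<and>
           clique_edges K \<subseteq> G \<union> {e})}"

definition k4_proc :: "nat \<Rightarrow> nat set set \<Rightarrow> nat \<Rightarrow> nat set set" where
  "k4_proc n G t = (k4_step n ^^ t) G"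

definition tau4 :: "nat \<Rightarrow> nat set set \<Rightarrow> nat" where
  "tau4 n G = (LEAST t. k4_proc n G t = (\<Union>s. k4_proc n G s))"

end

theory Submission
  imports Defs
begin

text \<open>Call a vertex set S of size at least 2 fast if it is a clique in G_{|S|-3}. Every
edge of G is fast (for |S| = 2, |S| - 3 = 0 by truncated subtraction). Two fast sets sharing
two vertices merge into a fast set one step later: each missing pair x, y together with the
two shared vertices spans a K_4 minus the edge xy. Consequently the three fast sets covering
the sides of a triangle extend the largest of them to a fast set containing the triangle, and
a K_4 all of whose edges but one lie in fast sets has all four vertices in one fast set. By
induction on t every edge of G_t lies in a fast set, whose size is at most n, so
G_t \<subseteq> G_{n-3} for all t.\<close>

lemma card_4_extend_pair:
  assumes "card K = 4" "a \<in> K" "b \<in> K" "a \<noteq> b"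
  obtains c d where "K = {a, b, c, d}" "distinct [a, b, c, d]"
proof -
  have "finite K" using assms(1) by (intro card_ge_0_finite) simp
  then have "card (K - {a, b}) = 2" using assms by (simp add: card_Diff_subset)
  then obtain c d where cd: "K - {a, b} = {c, d}" "c \<noteq> d" by (auto simp: card_2_iff)
  then have "K = {a, b, c, d}" using assms(2,3) by auto
  moreover have "distinct [a, b, c, d]" using cd assms(4) by auto
  ultimately show ?thesis by (rule that)
qed

lemma clique_edges_subset_iff:
  "clique_edges S \<subseteq> H \<longleftrightarrow> (\<forall>x\<in>S. \<forall>y\<in>S. x \<noteq> y \<longrightarrow> {x, y} \<in> H)"
proof
  assume "clique_edges S \<subseteq> H"
  then show "\<forall>x\<in>S. \<forall>y\<in>S. x \<noteq> y \<longrightarrow> {x, y} \<in> H"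
    by (auto simp: clique_edges_def subset_iff)
qed (auto simp: clique_edges_def card_2_iff)

lemma clique_edges_mono: "S \<subseteq> T \<Longrightarrow> clique_edges S \<subseteq> clique_edges T"
  by (auto simp: clique_edges_def)

lemma clique_edges_insert_insert:
  "clique_edges (insert x (insert y C))
     \<subseteq> insert {x, y} (clique_edges (insert x C) \<union> clique_edges (insert y C))"
  by (auto simp: clique_edges_def card_2_iff)

lemma k4_step_increasing: "H \<subseteq> k4_step n H"
  by (simp add: k4_step_def)

lemma k4_step_clique_Un:
  assumes A: "clique_edges A \<subseteq> H" and B: "clique_edges B \<subseteq> H"
    and uw: "u \<noteq> w" "u \<in> A \<inter> B" "w \<in> A \<inter> B" and sub: "A \<union> B \<subseteq> {0..<n}"
  shows "clique_edges (A \<union> B) \<subseteq> k4_step n H"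
proof -
  have cross: "{x, y} \<in> k4_step n H" if x: "x \<in> A - B" and y: "y \<in> B - A" for x y
  proof -
    let ?K = "{x, y, u, w}"
    have d: "distinct [x, y, u, w]" using x y uw by auto
    then have "card ?K = 4" "?K \<subseteq> {0..<n}" using x y uw sub by auto
    moreover have "{x, y} \<in> clique_edges ?K" "card {x, y} = 2" "{x, y} \<subseteq> {0..<n}"
      using d x y sub by (auto simp: clique_edges_def)
    moreover have "clique_edges ?K \<subseteq> H \<union> {{x, y}}"
    proof -
      have "clique_edges {x, u, w} \<subseteq> H" "clique_edges {y, u, w} \<subseteq> H"
        using clique_edges_mono[of "{x, u, w}" A] clique_edges_mono[of "{y, u, w}" B] x y uw A B
        by auto
      then show ?thesis using clique_edges_insert_insert[of x y "{u, w}"] by blast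
    qed
    ultimately show ?thesis unfolding k4_step_def by blast
  qed
  have "{x, y} \<in> k4_step n H" if xy: "x \<in> A \<union> B" "y \<in> A \<union> B" "x \<noteq> y" for x y
  proof -
    consider "x \<in> A" "y \<in> A" | "x \<in> B" "y \<in> B" | "x \<in> A - B" "y \<in> B - A"
      | "y \<in> A - B" "x \<in> B - A"
      using xy by blast
    then show ?thesis
    proof cases
      case 1 then show ?thesis
        using A k4_step_increasing[of H n] \<open>x \<noteq> y\<close> by (auto simp: clique_edges_subset_iff)
    next
      case 2 then show ?thesis
        using B k4_step_increasing[of H n] \<open>x \<noteq> y\<close> by (auto simp: clique_edges_subset_iff)
    next
      case 3 then show ?thesis by (rule cross)
    next
      case 4 then show ?thesis using cross[of y x] by (simp add: insert_commute)
    qed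
  qed
  then show ?thesis by (simp add: clique_edges_subset_iff)
qed

lemma k4_proc_0 [simp]: "k4_proc n G 0 = G"
  by (simp add: k4_proc_def)

lemma k4_proc_Suc: "k4_proc n G (Suc t) = k4_step n (k4_proc n G t)"
  by (simp add: k4_proc_def)

lemma k4_proc_mono: "s \<le> t \<Longrightarrow> k4_proc n G s \<subseteq> k4_proc n G t"
proof (induction t rule: dec_induct)
  case (step t)
  then show ?case using k4_step_increasing by (auto simp: k4_proc_Suc)
qed simp

lemma k4_proc_graph_on: "graph_on n G \<Longrightarrow> graph_on n (k4_proc n G t)"
  by (induction t) (auto simp: k4_proc_Suc k4_step_def graph_on_def)

lemma tau4_le:
  assumes "\<And>t. k4_proc n G t \<subseteq> k4_proc n G T"
  shows "tau4 n G \<le> T"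
proof -
  have "k4_proc n G T = (\<Union>s. k4_proc n G s)" using assms by blast
  then show ?thesis unfolding tau4_def by (rule Least_le)
qed

definition fast_clique :: "nat \<Rightarrow> nat set set \<Rightarrow> nat set \<Rightarrow> bool" where
  "fast_clique n G S \<longleftrightarrow>
     S \<subseteq> {0..<n} \<and> 2 \<le> card S \<and> clique_edges S \<subseteq> k4_proc n G (card S - 3)"

lemma fast_clique_finite: "fast_clique n G S \<Longrightarrow> finite S"
  by (auto simp: fast_clique_def intro: finite_subset)

lemma fast_clique_edge: "fast_clique n G S \<Longrightarrow> x \<in> S \<Longrightarrow> y \<in> S \<Longrightarrow> x \<noteq> y
    \<Longrightarrow> s \<ge> card S - 3 \<Longrightarrow> {x, y} \<in> k4_proc n G s"
  unfolding fast_clique_def clique_edges_subset_iff using k4_proc_mono by blast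

lemma fast_clique_of_edge:
  assumes "graph_on n G" "e \<in> G" shows "fast_clique n G e"
proof -
  have e: "e \<subseteq> {0..<n}" "card e = 2" using assms by (auto simp: graph_on_def)
  have "clique_edges e = {e}"
    using e(2) by (auto simp: clique_edges_def card_2_iff)
  then show ?thesis using e assms(2) by (simp add: fast_clique_def)
qed

lemma fast_clique_Un:
  assumes A: "fast_clique n G A" and B: "fast_clique n G B"
    and uw: "u \<noteq> w" "u \<in> A \<inter> B" "w \<in> A \<inter> B"
  shows "fast_clique n G (A \<union> B)"
proof (cases "A \<subseteq> B \<or> B \<subseteq> A")
  case True
  then show ?thesis using A B by (auto simp: sup_absorb1 sup_absorb2)
next
  case False
  have fin: "finite A" "finite B" using A B by (auto intro: fast_clique_finite)
  have lt: "card A < card (A \<union> B)" "card B < card (A \<union> B)"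
    using False fin by (auto intro!: psubset_card_mono)
  have "\<not> (card A = 2 \<and> card B = 2)"
  proof
    assume "card A = 2 \<and> card B = 2"
    then have "A = {u, w}" "B = {u, w}"
      using card_subset_eq[of A "{u, w}"] card_subset_eq[of B "{u, w}"] fin uw by auto
    with False show False by simp
  qed
  then have 3: "3 \<le> card A \<or> 3 \<le> card B" using A B by (auto simp: fast_clique_def)
  define m where "m = max (card A - 3) (card B - 3)"
  have "clique_edges A \<subseteq> k4_proc n G m"
    using A k4_proc_mono[of "card A - 3" m n G] unfolding fast_clique_def m_def by auto
  moreover have "clique_edges B \<subseteq> k4_proc n G m"
    using B k4_proc_mono[of "card B - 3" m n G] unfolding fast_clique_def m_def by auto
  moreover have sub: "A \<union> B \<subseteq> {0..<n}" using A B by (auto simp: fast_clique_def)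
  ultimately have "clique_edges (A \<union> B) \<subseteq> k4_proc n G (Suc m)"
    unfolding k4_proc_Suc by (rule k4_step_clique_Un[OF _ _ uw])
  moreover have "Suc m \<le> card (A \<union> B) - 3" using 3 lt unfolding m_def by auto
  ultimately have "clique_edges (A \<union> B) \<subseteq> k4_proc n G (card (A \<union> B) - 3)"
    using k4_proc_mono by blast
  moreover have "2 \<le> card (A \<union> B)" using lt A by (simp add: fast_clique_def)
  ultimately show ?thesis using sub by (simp add: fast_clique_def)
qed

lemma fast_clique_insert:
  assumes A: "fast_clique n G A" and xy: "x \<noteq> y" "x \<in> A" "y \<in> A" and z: "z \<notin> A" "z < n"
    and zx: "{z, x} \<in> k4_proc n G (card A - 3)" and zy: "{z, y} \<in> k4_proc n G (card A - 3)"
  shows "fast_clique n G (insert z A)"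
proof -
  have fin: "finite A" using A by (rule fast_clique_finite)
  have xyz: "clique_edges {x, y, z} \<subseteq> k4_proc n G (card A - 3)"
    using zx zy fast_clique_edge[OF A xy(2,3,1)]
    by (auto simp: clique_edges_subset_iff insert_commute)
  show ?thesis
  proof (cases "A = {x, y}")
    case True
    then show ?thesis using A xy z xyz by (auto simp: fast_clique_def insert_commute)
  next
    case False
    then obtain c where "c \<in> A" "c \<noteq> x" "c \<noteq> y" using xy by blast
    then have "card {c, x, y} \<le> card A" using xy fin by (intro card_mono) auto
    then have "3 \<le> card A" using \<open>c \<noteq> x\<close> \<open>c \<noteq> y\<close> xy by simp
    have "clique_edges (A \<union> {x, y, z}) \<subseteq> k4_proc n G (Suc (card A - 3))"
      unfolding k4_proc_Suc
      by (rule k4_step_clique_Un[of A _ "{x, y, z}" x y])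
        (use A xyz xy z in \<open>auto simp: fast_clique_def\<close>)
    moreover have "A \<union> {x, y, z} = insert z A" using xy by auto
    moreover have "card (insert z A) - 3 = Suc (card A - 3)"
      using fin z \<open>3 \<le> card A\<close> by simp
    ultimately show ?thesis using A z by (auto simp: fast_clique_def)
  qed
qed

lemma fast_clique_triangle:
  assumes "x \<noteq> y" "y \<noteq> z" "x \<noteq> z"
    and A: "fast_clique n G A" "x \<in> A" "y \<in> A"
    and B: "fast_clique n G B" "y \<in> B" "z \<in> B"
    and C: "fast_clique n G C" "x \<in> C" "z \<in> C"
  shows "\<exists>S. fast_clique n G S \<and> x \<in> S \<and> y \<in> S \<and> z \<in> S"
proof -
  have largest: "\<exists>S. fast_clique n G S \<and> x \<in> S \<and> y \<in> S \<and> z \<in> S"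
    if "x \<noteq> y" "y \<noteq> z" "x \<noteq> z"
      and "fast_clique n G A" "x \<in> A" "y \<in> A"
      and "fast_clique n G B" "y \<in> B" "z \<in> B"
      and "fast_clique n G C" "x \<in> C" "z \<in> C"
      and "card B \<le> card A" "card C \<le> card A"
    for x y z A B C
  proof (cases "z \<in> A")
    case False
    have "{z, x} \<in> k4_proc n G (card A - 3)" "{z, y} \<in> k4_proc n G (card A - 3)"
      using fast_clique_edge[of n G C z x] fast_clique_edge[of n G B z y] that by auto
    moreover have "z < n" using that by (auto simp: fast_clique_def)
    ultimately show ?thesis using fast_clique_insert[of n G A x y z] that False by blast
  qed (use that in blast)
  consider "card B \<le> card A" "card C \<le> card A" | "card A \<le> card B" "card C \<le> card B"
    | "card A \<le> card C" "card B \<le> card C" by linarith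
  then show ?thesis
  proof cases
    case 1 then show ?thesis using largest[of x y z A B C] assms by blast
  next
    case 2 then show ?thesis using largest[of y z x B C A] assms by blast
  next
    case 3 then show ?thesis using largest[of x z y C B A] assms by blast
  qed
qed

lemma fast_clique_K4:
  assumes "distinct [a, b, c, d]"
    and fast: "\<And>p q. p \<in> {a, b, c, d} \<Longrightarrow> q \<in> {a, b, c, d} \<Longrightarrow> p \<noteq> q \<Longrightarrow> {p, q} \<noteq> {a, b}
      \<Longrightarrow> \<exists>S. fast_clique n G S \<and> p \<in> S \<and> q \<in> S"
  shows "\<exists>S. fast_clique n G S \<and> a \<in> S \<and> b \<in> S"
proof -
  obtain Sac Scd Sad Sbc Sbd where
    "fast_clique n G Sac" "a \<in> Sac" "c \<in> Sac" and "fast_clique n G Scd" "c \<in> Scd" "d \<in> Scd"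
    and "fast_clique n G Sad" "a \<in> Sad" "d \<in> Sad" and "fast_clique n G Sbc" "b \<in> Sbc" "c \<in> Sbc"
    and "fast_clique n G Sbd" "b \<in> Sbd" "d \<in> Sbd"
    using fast[of a c] fast[of c d] fast[of a d] fast[of b c] fast[of b d] assms(1)
    by (auto simp: doubleton_eq_iff)
  then obtain T U where
    "fast_clique n G T" "a \<in> T" "c \<in> T" "d \<in> T" and "fast_clique n G U" "b \<in> U" "c \<in> U" "d \<in> U"
    using fast_clique_triangle[of a c d n G Sac Scd Sad]
      fast_clique_triangle[of b c d n G Sbc Scd Sbd] assms(1)
    by auto
  then show ?thesis using fast_clique_Un[of n G T U c d] assms(1) by auto
qed

lemma k4_proc_edge_in_fast_clique:
  assumes G: "graph_on n G"
  shows "e \<in> k4_proc n G t \<Longrightarrow> \<exists>S. fast_clique n G S \<and> e \<subseteq> S"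
proof (induction t arbitrary: e)
  case 0
  then show ?case using fast_clique_of_edge[OF G] by auto
next
  case (Suc t)
  show ?case
  proof (cases "e \<in> k4_proc n G t")
    case False
    then obtain K where "card K = 4" "e \<in> clique_edges K"
      and K: "clique_edges K \<subseteq> k4_proc n G t \<union> {e}"
      using Suc.prems unfolding k4_proc_Suc k4_step_def by blast
    then obtain a b where "e = {a, b}" "a \<noteq> b" "a \<in> K" "b \<in> K"
      by (auto simp: clique_edges_def card_2_iff)
    with \<open>card K = 4\<close> obtain c d where abcd: "K = {a, b, c, d}" "distinct [a, b, c, d]" "e = {a, b}"
      using card_4_extend_pair by metis
    have "\<exists>S. fast_clique n G S \<and> p \<in> S \<and> q \<in> S"
      if "p \<in> K" "q \<in> K" "p \<noteq> q" "{p, q} \<noteq> {a, b}" for p q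
    proof -
      have "{p, q} \<in> k4_proc n G t"
        using K that abcd(3) by (auto simp: clique_edges_subset_iff)
      then show ?thesis using Suc.IH by blast
    qed
    then show ?thesis using fast_clique_K4[of a b c d n G] abcd by auto
  qed (use Suc.IH in blast)
qed

theorem theorem2:
  fixes n :: nat and G :: "nat set set"
  assumes "n \<ge> 3" and "graph_on n G"
  shows "tau4 n G \<le> n - 3"
proof (rule tau4_le)
  fix t
  show "k4_proc n G t \<subseteq> k4_proc n G (n - 3)"
  proof
    fix e assume e: "e \<in> k4_proc n G t"
    then obtain S where S: "fast_clique n G S" "e \<subseteq> S"
      using k4_proc_edge_in_fast_clique[OF assms(2)] by blast
    have "card S \<le> n"
      using S(1) card_mono[of "{0..<n}" S] by (simp add: fast_clique_def)
    moreover have "card e = 2"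
      using e k4_proc_graph_on[OF assms(2)] by (auto simp: graph_on_def)
    ultimately show "e \<in> k4_proc n G (n - 3)"
      using S fast_clique_edge[of n G S _ _ "n - 3"] by (auto simp: card_2_iff)
  qed
qed

end
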